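(* Let $I$ be the $2\times2$ identity, $e_1=\begin{pmatrix}1&0\\0&-1\end{pmatrix}$, $e_2=\begin{pmatrix}0&1\\1&0\end{pmatrix}$, $E=e_1e_2$, and let $V=\mathrm{span}_{\mathbb{R}}\{e_1,e_2\}$ with the Euclidean norm for which $\{e_1,e_2\}$ is orthonormal, i.e. $\|\gamma_1e_1+\gamma_2e_2\|=\sqrt{\gamma_1^2+\gamma_2^2}$. Let $A,B\in M_2(\mathbb{R})$ with $A=\alpha_0I+\alpha_{12}E+u$ and $B=\beta_0I+\beta_{12}E+v$, where $\alpha_0,\alpha_{12},\beta_0,\beta_{12}\in\mathbb{R}$ and $u,v\in V$. Then there exists $P\in O(2)$ with $PAP^{-1}=B$ if and only if $\alpha_0=\beta_0$, $\alpha_{12}=\pm\beta_{12}$ and $\|u\|=\|v\|$.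
   Context: $O(2)=\{P\in M_2(\mathbb{R}): PP^t=I\}$ is the real orthogonal group. *)

theory Defs
  imports "HOL-Analysis.Analysis"
begin

type_synonym mat2 = "real ^ 2 ^ 2"

definition mk2 :: "real \<Rightarrow> real \<Rightarrow> real \<Rightarrow> real \<Rightarrow> mat2" where
  "mk2 a b c d = (\<chi> i j. if i = 1 then (if j = 1 then a else b) else (if j = 1 then c else d))"

definition e1 :: mat2 where "e1 = mk2 1 0 0 (-1)"
definition e2 :: mat2 where "e2 = mk2 0 1 1 0"
definition EE :: mat2 where "EE = e1 ** e2"

definition O2 :: "mat2 set" where
  "O2 = {P. P ** transpose P = mat 1}"

end

theory Submission
  imports Defs
begin

(* Conjugation by P in O(2) fixes I, multiplies E = e1 e2 by det P = +-1 and maps V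
   isometrically onto itself: if P has angle theta, it acts on V as the rotation by 2 theta,
   followed by the reflection in e1 when det P = -1. This gives the invariants. Conversely,
   two vectors of V of equal norm differ by a rotation by some angle phi, which is realised
   by the P of angle phi/2 whose determinant matches the sign relating alpha12 and beta12. *)

lemma mat2_eq_iff:
  "(M::mat2) = N \<longleftrightarrow> M$1$1 = N$1$1 \<and> M$1$2 = N$1$2 \<and> M$2$1 = N$2$1 \<and> M$2$2 = N$2$2"
  by (auto simp: vec_eq_iff forall_2)

lemma mk2_nth [simp]:
  "mk2 a b c d $ 1 $ 1 = a" "mk2 a b c d $ 1 $ 2 = b"
  "mk2 a b c d $ 2 $ 1 = c" "mk2 a b c d $ 2 $ 2 = d"
  by (simp_all add: mk2_def)

lemma mat2_eq_mk2: "(M::mat2) = mk2 (M$1$1) (M$1$2) (M$2$1) (M$2$2)"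
  by (simp add: mat2_eq_iff)

lemma mk2_mult:
  "mk2 a b c d ** mk2 a' b' c' d' = mk2 (a*a' + b*c') (a*b' + b*d') (c*a' + d*c') (c*b' + d*d')"
  by (simp add: mat2_eq_iff matrix_matrix_mult_def sum_2)

lemma transpose_mk2: "transpose (mk2 a b c d) = mk2 a c b d"
  by (simp add: mat2_eq_iff transpose_def)

definition clifford2 :: "real \<Rightarrow> real \<Rightarrow> real \<Rightarrow> real \<Rightarrow> mat2" where
  "clifford2 a0 a12 g1 g2 = a0 *\<^sub>R mat 1 + a12 *\<^sub>R EE + (g1 *\<^sub>R e1 + g2 *\<^sub>R e2)"

lemma clifford2_mk2:
  "clifford2 a0 a12 g1 g2 = mk2 (a0 + g1) (a12 + g2) (g2 - a12) (a0 - g1)"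
  by (simp add: clifford2_def mat2_eq_iff EE_def e1_def e2_def mk2_mult) (simp add: mat_def)

lemma clifford2_eq_iff:
  "clifford2 a0 a12 g1 g2 = clifford2 b0 b12 d1 d2 \<longleftrightarrow> a0 = b0 \<and> a12 = b12 \<and> g1 = d1 \<and> g2 = d2"
  by (auto simp: clifford2_mk2 mat2_eq_iff)

lemma matrix_inv_unique:
  fixes A :: "'a::semiring_1^'n^'n"
  assumes "A ** B = mat 1" "B ** A = mat 1"
  shows "matrix_inv A = B"
proof -
  have inv: "A ** matrix_inv A = mat 1 \<and> matrix_inv A ** A = mat 1"
    unfolding matrix_inv_def by (rule someI[of _ B]) (use assms in simp)
  have "matrix_inv A = matrix_inv A ** (A ** B)" using assms(1) by simp
  also have "\<dots> = B" using inv by (simp add: matrix_mul_assoc)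
  finally show ?thesis .
qed

lemma matrix_inv_O2: "P \<in> O2 \<Longrightarrow> matrix_inv P = transpose P"
  by (simp add: O2_def matrix_inv_unique matrix_left_right_inverse)

(* t is the determinant: a rotation for t = 1, a reflection for t = -1 *)
definition orth2 :: "real \<Rightarrow> real \<Rightarrow> mat2" where
  "orth2 \<theta> t = mk2 (cos \<theta>) (sin \<theta>) (- t * sin \<theta>) (t * cos \<theta>)"

lemma orthonormal_rows_2:
  fixes p q r s :: real
  assumes "p\<^sup>2 + q\<^sup>2 = 1" "p * r + q * s = 0" "r\<^sup>2 + s\<^sup>2 = 1"
  obtains t where "t\<^sup>2 = 1" "r = - t * q" "s = t * p"
proof
  define t where "t = p * s - q * r"
  show r: "r = - t * q" using assms unfolding t_def by algebra
  show s: "s = t * p" using assms unfolding t_def by algebra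
  show "t\<^sup>2 = 1" using assms unfolding r s by algebra
qed

lemma mk2_in_O2_iff:
  "mk2 p q r s \<in> O2 \<longleftrightarrow> p\<^sup>2 + q\<^sup>2 = 1 \<and> p * r + q * s = 0 \<and> r\<^sup>2 + s\<^sup>2 = 1"
  by (auto simp: O2_def transpose_mk2 mk2_mult mat2_eq_iff mat_def power2_eq_square mult.commute)

lemma O2_iff_orth2: "P \<in> O2 \<longleftrightarrow> (\<exists>\<theta> t. t\<^sup>2 = 1 \<and> P = orth2 \<theta> t)"
proof
  assume "P \<in> O2"
  moreover obtain p q r s where P: "P = mk2 p q r s" using mat2_eq_mk2 by blast
  ultimately have rows: "p\<^sup>2 + q\<^sup>2 = 1" "p * r + q * s = 0" "r\<^sup>2 + s\<^sup>2 = 1"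
    by (simp_all add: mk2_in_O2_iff)
  obtain t where t: "t\<^sup>2 = 1" "r = - t * q" "s = t * p" using orthonormal_rows_2[OF rows] .
  obtain \<theta> where "p = cos \<theta>" "q = sin \<theta>" using sincos_total_2pi[OF rows(1)] by metis
  then show "\<exists>\<theta> t. t\<^sup>2 = 1 \<and> P = orth2 \<theta> t" using P t by (auto simp: orth2_def)
next
  assume "\<exists>\<theta> t. t\<^sup>2 = 1 \<and> P = orth2 \<theta> t"
  then show "P \<in> O2"
    by (auto simp: orth2_def mk2_in_O2_iff algebra_simps)
qed

lemma orth2_conj_clifford2:
  assumes "t\<^sup>2 = 1"
  shows "orth2 \<theta> t ** clifford2 a0 a12 g1 g2 ** transpose (orth2 \<theta> t) =
    clifford2 a0 (t * a12) (cos (2*\<theta>) * g1 + sin (2*\<theta>) * g2) (t * (cos (2*\<theta>) * g2 - sin (2*\<theta>) * g1))"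
proof -
  have "(cos \<theta>)\<^sup>2 + (sin \<theta>)\<^sup>2 = 1" by simp
  then show ?thesis
    using assms unfolding orth2_def clifford2_mk2 transpose_mk2 mk2_mult mat2_eq_iff mk2_nth cos_double sin_double
    by algebra
qed

lemma rotation_sum_squares:
  fixes \<phi> x y :: real
  shows "(cos \<phi> * x + sin \<phi> * y)\<^sup>2 + (cos \<phi> * y - sin \<phi> * x)\<^sup>2 = x\<^sup>2 + y\<^sup>2"
  using sin_cos_squared_add[of \<phi>] by algebra

lemma rotation_between_equal_norms:
  fixes x1 y1 x2 y2 :: real
  assumes "x1\<^sup>2 + y1\<^sup>2 = x2\<^sup>2 + y2\<^sup>2"
  obtains \<phi> where "x2 = cos \<phi> * x1 + sin \<phi> * y1" "y2 = cos \<phi> * y1 - sin \<phi> * x1"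
proof
  define z1 z2 where "z1 = Complex x1 y1" and "z2 = Complex x2 y2"
  define r where "r = cmod z1"
  have "r = cmod z2" using assms by (simp add: r_def z1_def z2_def complex_norm)
  then have polar: "x1 = r * cos (Arg z1)" "y1 = r * sin (Arg z1)" "x2 = r * cos (Arg z2)" "y2 = r * sin (Arg z2)"
    using rcis_cmod_Arg[of z1] rcis_cmod_Arg[of z2] unfolding r_def z1_def z2_def complex_eq_iff
    by simp_all
  show "x2 = cos (Arg z1 - Arg z2) * x1 + sin (Arg z1 - Arg z2) * y1"
    unfolding polar cos_diff sin_diff using sin_cos_squared_add[of "Arg z1"] by algebra
  show "y2 = cos (Arg z1 - Arg z2) * y1 - sin (Arg z1 - Arg z2) * x1"
    unfolding polar cos_diff sin_diff using sin_cos_squared_add[of "Arg z1"] by algebra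
qed

lemma O2_conj_clifford2_iff:
  "(\<exists>P\<in>O2. P ** clifford2 a0 a12 g1 g2 ** matrix_inv P = clifford2 b0 b12 d1 d2) \<longleftrightarrow>
   (\<exists>\<phi> t. t\<^sup>2 = 1 \<and> b0 = a0 \<and> b12 = t * a12 \<and>
      d1 = cos \<phi> * g1 + sin \<phi> * g2 \<and> d2 = t * (cos \<phi> * g2 - sin \<phi> * g1))"
proof -
  have double_angle: "(\<exists>\<theta>. Q (2 * \<theta>)) \<longleftrightarrow> (\<exists>\<phi>. Q \<phi>)" for Q :: "real \<Rightarrow> bool"
    by (metis mult_2 field_sum_of_halves)
  have "(\<exists>P\<in>O2. P ** clifford2 a0 a12 g1 g2 ** matrix_inv P = clifford2 b0 b12 d1 d2) \<longleftrightarrow>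
      (\<exists>\<theta> t. t\<^sup>2 = 1 \<and>
        orth2 \<theta> t ** clifford2 a0 a12 g1 g2 ** transpose (orth2 \<theta> t) = clifford2 b0 b12 d1 d2)"
    using matrix_inv_O2 O2_iff_orth2 by metis
  also have "\<dots> \<longleftrightarrow> (\<exists>\<theta> t. t\<^sup>2 = 1 \<and> b0 = a0 \<and> b12 = t * a12 \<and>
      d1 = cos (2*\<theta>) * g1 + sin (2*\<theta>) * g2 \<and> d2 = t * (cos (2*\<theta>) * g2 - sin (2*\<theta>) * g1))"
    by (auto simp: orth2_conj_clifford2 clifford2_eq_iff cong: conj_cong)
  finally show ?thesis
    by (subst double_angle[symmetric]) (simp only: ex_comm[of "\<lambda>\<theta> t. _"])
qed

lemma signed_rotation_iff:
  fixes a b g1 g2 d1 d2 :: real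
  shows "(\<exists>\<phi> t. t\<^sup>2 = 1 \<and> b = t * a \<and>
      d1 = cos \<phi> * g1 + sin \<phi> * g2 \<and> d2 = t * (cos \<phi> * g2 - sin \<phi> * g1)) \<longleftrightarrow>
    (a = b \<or> a = - b) \<and> g1\<^sup>2 + g2\<^sup>2 = d1\<^sup>2 + d2\<^sup>2"
proof
  assume "\<exists>\<phi> t. t\<^sup>2 = 1 \<and> b = t * a \<and>
      d1 = cos \<phi> * g1 + sin \<phi> * g2 \<and> d2 = t * (cos \<phi> * g2 - sin \<phi> * g1)"
  then obtain \<phi> t where t: "t\<^sup>2 = 1" "b = t * a"
    and d: "d1 = cos \<phi> * g1 + sin \<phi> * g2" "d2 = t * (cos \<phi> * g2 - sin \<phi> * g1)"
    by blast
  have "a = b \<or> a = - b" using t by (auto simp: power2_eq_1_iff)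
  moreover have "d1\<^sup>2 + d2\<^sup>2 = g1\<^sup>2 + g2\<^sup>2"
    unfolding d power_mult_distrib t(1) by (simp add: rotation_sum_squares)
  ultimately show "(a = b \<or> a = - b) \<and> g1\<^sup>2 + g2\<^sup>2 = d1\<^sup>2 + d2\<^sup>2" by simp
next
  assume inv: "(a = b \<or> a = - b) \<and> g1\<^sup>2 + g2\<^sup>2 = d1\<^sup>2 + d2\<^sup>2"
  then obtain t :: real where t: "t = 1 \<or> t = -1" "b = t * a"
    by force
  with inv have "g1\<^sup>2 + g2\<^sup>2 = d1\<^sup>2 + (t * d2)\<^sup>2" by auto
  then obtain \<phi> where "d1 = cos \<phi> * g1 + sin \<phi> * g2" "t * d2 = cos \<phi> * g2 - sin \<phi> * g1"
    by (rule rotation_between_equal_norms)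
  then show "\<exists>\<phi> t. t\<^sup>2 = 1 \<and> b = t * a \<and>
      d1 = cos \<phi> * g1 + sin \<phi> * g2 \<and> d2 = t * (cos \<phi> * g2 - sin \<phi> * g1)"
    using t by (intro exI[of _ \<phi>] exI[of _ t]) auto
qed

theorem mainTheorem9:
  fixes \<alpha>0 \<alpha>12 \<beta>0 \<beta>12 \<gamma>1 \<gamma>2 \<delta>1 \<delta>2 :: real and A B :: mat2
  assumes "A = \<alpha>0 *\<^sub>R mat 1 + \<alpha>12 *\<^sub>R EE + (\<gamma>1 *\<^sub>R e1 + \<gamma>2 *\<^sub>R e2)"
    and "B = \<beta>0 *\<^sub>R mat 1 + \<beta>12 *\<^sub>R EE + (\<delta>1 *\<^sub>R e1 + \<delta>2 *\<^sub>R e2)"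
  shows "(\<exists>P\<in>O2. P ** A ** matrix_inv P = B) \<longleftrightarrow>
         (\<alpha>0 = \<beta>0 \<and> (\<alpha>12 = \<beta>12 \<or> \<alpha>12 = - \<beta>12) \<and>
          sqrt (\<gamma>1\<^sup>2 + \<gamma>2\<^sup>2) = sqrt (\<delta>1\<^sup>2 + \<delta>2\<^sup>2))"
proof -
  have "A = clifford2 \<alpha>0 \<alpha>12 \<gamma>1 \<gamma>2" "B = clifford2 \<beta>0 \<beta>12 \<delta>1 \<delta>2"
    using assms by (simp_all add: clifford2_def)
  then have "(\<exists>P\<in>O2. P ** A ** matrix_inv P = B) \<longleftrightarrow>
      \<alpha>0 = \<beta>0 \<and> (\<exists>\<phi> t. t\<^sup>2 = 1 \<and> \<beta>12 = t * \<alpha>12 \<and>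
        \<delta>1 = cos \<phi> * \<gamma>1 + sin \<phi> * \<gamma>2 \<and> \<delta>2 = t * (cos \<phi> * \<gamma>2 - sin \<phi> * \<gamma>1))"
    by (auto simp: O2_conj_clifford2_iff)
  then show ?thesis
    by (simp add: signed_rotation_iff)
qed

end
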